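(* Let $a$ and $b$ be coprime odd integers, let $\beta\geq 0$ be an integer, and let $\gamma$ be a positive integer such that $2^\gamma\,\|\,(a+b)$. Then: 1) If $\gamma<\beta$, then $G_{(a,b)}(\beta)=\emptyset$. 2) If $2\leq\beta\leq\gamma$, then $G_{(a,b)}(\gamma)=\{d\in\mathbb{N} : d=1 \text{ or } d \text{ is odd and } 2\,\|\,\operatorname{ord}_p(\tfrac{a}{b}) \text{ for every prime } p \text{ dividing } d\}$, and for $2\leq\beta<\gamma$, $G_{(a,b)}(\beta)=\bigcup_{i=0}^{\gamma-\beta}\{d2^i : d\in G_{(a,b)}(\gamma)\}=G_{(a,b)}(\beta+1)\cup\{d2^{\gamma-\beta} : d\in G_{(a,b)}(\gamma)\}$. 3) If $\beta\in\{0,1\}$, then $G_{(a,b)}(1)=\{2d : d\in G_{(a,b)}(2)\}\cup\{d\in\mathbb{N} : d=1 \text{ or } d \text{ is odd and there exists } s\geq1 \text{ such that } 2^s\,\|\,\operatorname{ord}_p(\tfrac{a}{b}) \text{ for every prime } p \text{ dividing } d\}$ and $G_{(a,b)}(0)=G_{(a,b)}(1)\cup\{2d : d\in G_{(a,b)}(1)\}$.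
   Context: For coprime nonzero integers $a,b$ and an integer $\beta\geq0$, $G_{(a,b)}(\beta)$ is the set of positive integers $d$ such that $2^\beta d\mid(a^k+b^k)$ for some positive integer $k$. For $n$ coprime to $ab$, $\operatorname{ord}_n(\frac{a}{b})$ denotes the multiplicative order of $ab^{-1}$ modulo $n$ (conditions on $\operatorname{ord}_p(\frac ab)$ presuppose that it is defined). $2^\gamma\,\|\,m$ means $2^\gamma\mid m$ and $2^{\gamma+1}\nmid m$. *)

theory Defs
  imports "HOL-Number_Theory.Number_Theory"
begin

definition G :: "int \<Rightarrow> int \<Rightarrow> nat \<Rightarrow> nat set" where
  "G a b \<beta> = {d::nat. d > 0 \<and> (\<exists>k::nat. k > 0 \<and> int (2 ^ \<beta> * d) dvd a ^ k + b ^ k)}"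

text \<open>Multiplicative order of a * b^(-1) modulo n, i.e. the least k > 0 with a^k = b^k (mod n);
  defined only for n coprime to a*b (value 0 otherwise; all uses below require coprimality).\<close>
definition ord_ratio :: "nat \<Rightarrow> int \<Rightarrow> int \<Rightarrow> nat" where
  "ord_ratio n a b = (if coprime (int n) (a * b)
     then (LEAST k::nat. k > 0 \<and> [a ^ k = b ^ k] (mod int n)) else 0)"

definition exact_pow2 :: "nat \<Rightarrow> 'a::comm_semiring_1 \<Rightarrow> bool" where
  "exact_pow2 g m \<longleftrightarrow> 2 ^ g dvd m \<and> \<not> 2 ^ (g + 1) dvd m"

end

theory Submission
  imports Defs
begin

text \<open>
  For odd \<open>k\<close> the cofactor of \<open>a + b\<close> in \<open>a\<^sup>k + b\<^sup>k\<close> is odd, so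
  \<open>2\<^sup>\<gamma>\<close> exactly divides \<open>a\<^sup>k + b\<^sup>k\<close>; for even \<open>k\<close> we have
  \<open>a\<^sup>k + b\<^sup>k = 2 (mod 4)\<close>. This fixes the admissible powers of 2 in the
  elements of \<open>G a b \<beta>\<close> and reduces everything to odd divisors.
  An odd prime \<open>p\<close> divides \<open>a\<^sup>k + b\<^sup>k\<close> with \<open>k = 2\<^sup>t q\<close>, \<open>q\<close> odd, iff
  \<open>a\<^sup>2\<^sup>k = b\<^sup>2\<^sup>k\<close> but \<open>a\<^sup>k \<noteq> b\<^sup>k\<close> modulo \<open>p\<close>, i.e. iff \<open>2\<^sup>t\<^sup>+\<^sup>1\<close> exactly
  divides \<open>ord\<^sub>p(a/b)\<close>. Conversely every power of such a \<open>p\<close> divides a sum of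
  this shape, by lifting \<open>p\<^sup>j | x + y \<Longrightarrow> p\<^sup>j\<^sup>+\<^sup>1 | x\<^sup>p + y\<^sup>p\<close>, and the
  exponents for coprime prime powers are merged by passing to odd multiples.
\<close>

lemma power_sum_odd_factor:
  fixes x y :: "'a::comm_ring_1"
  assumes "odd n"
  shows "x ^ n + y ^ n = (x + y) * (\<Sum>i<n. (- y) ^ (n - Suc i) * x ^ i)"
  using power_diff_sumr2[of x n "- y"] assms by simp

lemma dvd_power_sum_odd_multiple:
  fixes x y :: "'a::comm_ring_1"
  assumes "d dvd x ^ k + y ^ k" "odd q"
  shows "d dvd x ^ (k * q) + y ^ (k * q)"
  using dvd_trans[OF assms(1)] power_sum_odd_factor[OF assms(2), of "x ^ k" "y ^ k"]
  by (simp add: power_mult)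

lemma mult_dvd_power_sum_odd_multiples:
  fixes x y :: "'a::ring_gcd"
  assumes "d1 dvd x ^ (k * q1) + y ^ (k * q1)" "d2 dvd x ^ (k * q2) + y ^ (k * q2)"
    and "coprime d1 d2" "odd q1" "odd q2"
  shows "d1 * d2 dvd x ^ (k * (q1 * q2)) + y ^ (k * (q1 * q2))"
proof (rule divides_mult)
  show "d1 dvd x ^ (k * (q1 * q2)) + y ^ (k * (q1 * q2))"
    using dvd_power_sum_odd_multiple[OF assms(1,5)] by (simp add: mult.assoc)
  show "d2 dvd x ^ (k * (q1 * q2)) + y ^ (k * (q1 * q2))"
    using dvd_power_sum_odd_multiple[OF assms(2,4)] by (simp add: ac_simps)
qed (fact assms(3))

lemma odd_power_sum_cofactor:
  fixes x y :: int
  assumes "odd n" "odd x" "odd y"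
  shows "odd (\<Sum>i<n. (- y) ^ (n - Suc i) * x ^ i)"
proof -
  have "[(\<Sum>i<n. (- y) ^ (n - Suc i) * x ^ i) = (\<Sum>i<n. 1)] (mod 2)"
    by (rule cong_sum) (use assms in \<open>auto simp: cong_def odd_iff_mod_2_eq_one[symmetric]\<close>)
  hence "even (\<Sum>i<n. (- y) ^ (n - Suc i) * x ^ i) \<longleftrightarrow> even (int n)"
    by (simp add: cong_dvd_iff)
  thus ?thesis
    using assms(1) by simp
qed

lemma odd_times_pow2_decomposition:
  fixes x :: nat
  assumes "x > 0"
  obtains d i where "x = d * 2 ^ i" "odd d"
proof -
  have "x \<noteq> 0" "\<not> is_unit (2 :: nat)" using assms by simp_all
  then obtain d where "x = 2 ^ multiplicity 2 x * d" "\<not> 2 dvd d"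
    using multiplicity_decompose'[of x 2] by blast
  thus thesis using that by (simp add: mult.commute)
qed

lemma ex_Suc_iff_ex_ge_1: "(\<exists>t. P (Suc t)) \<longleftrightarrow> (\<exists>s\<ge>1. P s)"
  by (metis Suc_le_D One_nat_def le_add1 plus_1_eq_Suc)

lemma ord_ratio_as_ord:
  fixes a b :: int and n :: nat
  assumes "n > 0" "coprime (int n) (a * b)"
  obtains c where "coprime n c" "ord_ratio n a b = ord n c"
    "\<And>k. [a ^ k = b ^ k] (mod int n) \<longleftrightarrow> [c ^ k = 1] (mod n)"
proof -
  obtain b' where b': "[b * b' = 1] (mod int n)"
    using assms(2) cong_solve_coprime_int[of b "int n"] by (auto simp: coprime_commute)
  define c where "c = nat ((a * b') mod int n)"
  have c: "[int c = a * b'] (mod int n)"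
    using assms(1) by (simp add: c_def cong_def)
  have "coprime b' (int n)"
    using b' coprime_iff_invertible_int[of b' "int n"] by (auto simp: mult.commute)
  hence coprime_c: "coprime n c"
    using assms(2) cong_imp_coprime[OF cong_sym[OF c]] by (simp add: coprime_commute)
  have cong_iff: "[a ^ k = b ^ k] (mod int n) \<longleftrightarrow> [c ^ k = 1] (mod n)" for k
  proof -
    have "[a ^ k = b ^ k] (mod int n) \<longleftrightarrow> [a ^ k * b' ^ k = b ^ k * b' ^ k] (mod int n)"
      using \<open>coprime b' (int n)\<close> by (simp add: cong_mult_rcancel)
    also have "\<dots> \<longleftrightarrow> [(a * b') ^ k = 1] (mod int n)"
      using cong_pow[OF b', of k] by (metis cong_sym cong_trans power_mult_distrib power_one)
    also have "\<dots> \<longleftrightarrow> [int c ^ k = 1] (mod int n)"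
      using cong_pow[OF c] by (meson cong_sym cong_trans)
    also have "\<dots> \<longleftrightarrow> [c ^ k = 1] (mod n)"
      by (metis cong_int_iff of_nat_1 of_nat_power)
    finally show ?thesis .
  qed
  have "ord_ratio n a b = ord n c"
    using assms(2) coprime_c by (simp add: ord_ratio_def ord_def cong_iff)
  with that coprime_c cong_iff show thesis by blast
qed

lemma ord_ratio_pos:
  assumes "n > 0" "coprime (int n) (a * b)"
  shows "ord_ratio n a b > 0"
  by (rule ord_ratio_as_ord[OF assms]) (simp add: ord_eq_0)

lemma cong_power_iff_ord_ratio_dvd:
  assumes "n > 0" "coprime (int n) (a * b)"
  shows "[a ^ k = b ^ k] (mod int n) \<longleftrightarrow> ord_ratio n a b dvd k"
  by (rule ord_ratio_as_ord[OF assms]) (metis ord_divides)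

lemma exact_pow2_mult_odd:
  fixes x y :: int
  assumes "exact_pow2 g x" "odd y"
  shows "exact_pow2 g (x * y)"
  using assms coprime_dvd_mult_left_iff[of "2 ^ (g + 1)" y x] unfolding exact_pow2_def
  by simp

lemma exact_pow2_dvd_iff:
  fixes x :: int and d :: nat
  assumes "exact_pow2 g x" "odd d"
  shows "2 ^ m * int d dvd x \<longleftrightarrow> m \<le> g \<and> int d dvd x"
proof -
  have "2 ^ m dvd x \<longleftrightarrow> m \<le> g"
    using assms(1) unfolding exact_pow2_def
    by (metis Suc_eq_plus1 dvd_trans le_imp_power_dvd not_less_eq_eq)
  moreover have "coprime ((2::int) ^ m) (int d)"
    using assms(2) by simp
  ultimately show ?thesis
    by (metis divides_mult dvd_mult_left dvd_mult_right)
qed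

lemma exact_pow2_odd_power_sum:
  fixes x y :: int
  assumes "exact_pow2 g (x + y)" "odd x" "odd y" "odd k"
  shows "exact_pow2 g (x ^ k + y ^ k)"
  using exact_pow2_mult_odd[OF assms(1) odd_power_sum_cofactor[OF assms(4,2,3)]]
  by (simp add: power_sum_odd_factor[OF assms(4)])

lemma exact_pow2_even_power_sum:
  fixes x y :: int
  assumes "odd x" "odd y" "even k"
  shows "exact_pow2 1 (x ^ k + y ^ k)"
proof -
  have power_mod_4: "z ^ k mod 4 = 1" if odd_z: "odd z" for z :: int
  proof -
    obtain i where "z = 2 * i + 1" using odd_z by (rule oddE)
    hence "z ^ 2 = 4 * (i ^ 2 + i) + 1" by (simp add: power2_eq_square algebra_simps)
    hence "z ^ 2 mod 4 = 1" by (simp add: mod_add_left_eq[symmetric])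
    moreover obtain j where "k = 2 * j" using assms(3) by blast
    ultimately show ?thesis
      by (simp add: power_mult power_mod[of "z ^ 2", symmetric])
  qed
  have "(x ^ k + y ^ k) mod 4 = 2"
    using power_mod_4[OF assms(1)] power_mod_4[OF assms(2)] by (simp add: mod_add_eq[symmetric])
  moreover have "exact_pow2 1 s" if "s mod 4 = 2" for s :: int
    using that unfolding exact_pow2_def
    by (simp only: power_one_right one_add_one power2_eq_square) presburger
  ultimately show ?thesis by blast
qed

lemma coprime_prime_of_dvd_power_sum:
  fixes a b :: int
  assumes "coprime a b" "prime p" "k > 0" "int p dvd a ^ k + b ^ k"
  shows "coprime (int p) (a * b)"
proof -
  have not_dvd: "\<not> int p dvd x" if "coprime x y" "int p dvd x ^ k + y ^ k" for x y :: int
  proof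
    assume "int p dvd x"
    hence "int p dvd x ^ k" using assms(3) by (meson dvd_power dvd_trans)
    hence "int p dvd y ^ k" using that(2) by (simp add: dvd_add_right_iff)
    hence "int p dvd y" using assms(2) prime_dvd_power[of "int p"] by simp
    thus False
      using coprime_common_divisor[OF that(1) \<open>int p dvd x\<close>] assms(2) by simp
  qed
  have "\<not> int p dvd a" "\<not> int p dvd b"
    using not_dvd[OF assms(1,4)] not_dvd[of b a] assms(1,4) by (simp_all add: coprime_commute add.commute)
  thus ?thesis
    using assms(2) by (simp add: prime_imp_coprime)
qed

lemma exact_pow2_Suc_of_dvd_not_dvd:
  fixes n q :: nat
  assumes "n dvd 2 ^ Suc t * q" "\<not> n dvd 2 ^ t * q" "odd q"
  shows "exact_pow2 (Suc t) n"
proof -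
  obtain c where c: "2 ^ Suc t * q = n * c" using assms(1) by blast
  have "odd c"
  proof
    assume "even c"
    then obtain c' where "c = 2 * c'" by blast
    hence "2 ^ t * q = n * c'" using c by simp
    thus False using assms(2) by auto
  qed
  have "2 ^ Suc t dvd n * c" using c by (metis dvd_triv_left)
  hence "2 ^ Suc t dvd n" using \<open>odd c\<close> by (simp add: coprime_dvd_mult_left_iff)
  moreover have "\<not> 2 ^ Suc (Suc t) dvd n"
  proof
    assume "2 ^ Suc (Suc t) dvd n"
    hence "2 ^ Suc (Suc t) dvd 2 ^ Suc t * q" using c by (metis dvd_mult2)
    thus False using assms(3) by simp
  qed
  ultimately show ?thesis by (simp add: exact_pow2_def)
qed

lemma exact_pow2_ord_ratio_of_dvd_power_sum:
  fixes a b :: int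
  assumes "prime p" "odd p" "coprime (int p) (a * b)" "odd q"
    and dvd: "int p dvd a ^ (2 ^ t * q) + b ^ (2 ^ t * q)"
  shows "exact_pow2 (Suc t) (ord_ratio p a b)"
proof -
  define k where "k = 2 ^ t * q"
  have p_pos: "p > 0" using assms(1) prime_gt_0_nat by blast
  have minus: "[a ^ k = - (b ^ k)] (mod int p)"
    using dvd by (simp add: k_def cong_iff_dvd_diff)
  hence "[a ^ (2 * k) = b ^ (2 * k)] (mod int p)"
    using cong_pow[OF minus, of 2] by (simp add: power_mult[symmetric] mult.commute)
  hence "ord_ratio p a b dvd 2 ^ Suc t * q"
    using cong_power_iff_ord_ratio_dvd[OF p_pos assms(3)] by (simp add: k_def mult.assoc)
  moreover have "\<not> ord_ratio p a b dvd 2 ^ t * q"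
  proof
    assume "ord_ratio p a b dvd 2 ^ t * q"
    hence "[a ^ k = b ^ k] (mod int p)"
      using cong_power_iff_ord_ratio_dvd[OF p_pos assms(3)] by (simp add: k_def)
    hence "int p dvd a ^ k - b ^ k" by (simp add: cong_iff_dvd_diff)
    with dvd have "int p dvd (a ^ k + b ^ k) - (a ^ k - b ^ k)"
      unfolding k_def by (rule dvd_diff)
    also have "(a ^ k + b ^ k) - (a ^ k - b ^ k) = 2 * b ^ k" by simp
    finally have "int p dvd 2 * b ^ k" .
    moreover have "coprime (int p) (2 * b ^ k)"
      using assms(2,3) by simp
    ultimately show False
      using assms(1) coprime_common_divisor[of "int p" "2 * b ^ k" "int p"] by simp
  qed
  ultimately show ?thesis using assms(4) by (rule exact_pow2_Suc_of_dvd_not_dvd)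
qed

lemma prime_dvd_power_sum_half_ord_ratio:
  fixes a b :: int
  assumes "prime p" "coprime (int p) (a * b)" "ord_ratio p a b = 2 * h"
  shows "int p dvd a ^ h + b ^ h"
proof -
  have p_pos: "p > 0" using assms(1) prime_gt_0_nat by blast
  have "h > 0" using ord_ratio_pos[OF p_pos assms(2)] assms(3) by simp
  have "int p dvd a ^ (2 * h) - b ^ (2 * h)"
    using cong_power_iff_ord_ratio_dvd[OF p_pos assms(2), of "2 * h"] assms(3)
    by (simp add: cong_iff_dvd_diff dvd_diff_commute)
  also have "a ^ (2 * h) - b ^ (2 * h) = (a ^ h - b ^ h) * (a ^ h + b ^ h)"
    by (simp add: mult.commute[of 2 h] power_mult power2_eq_square algebra_simps)
  finally have "int p dvd (a ^ h - b ^ h) * (a ^ h + b ^ h)" .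
  moreover have "\<not> int p dvd a ^ h - b ^ h"
  proof
    assume "int p dvd a ^ h - b ^ h"
    hence "2 * h dvd h"
      using cong_power_iff_ord_ratio_dvd[OF p_pos assms(2), of h] assms(3)
      by (simp add: cong_iff_dvd_diff)
    thus False using \<open>h > 0\<close> by (simp add: dvd_imp_le)
  qed
  ultimately show ?thesis
    using assms(1) prime_dvd_mult_iff[of "int p"] by simp
qed

lemma prime_power_dvd_power_sum_Suc:
  fixes x y :: int
  assumes "prime p" "odd p" "j > 0" "int p ^ j dvd x + y"
  shows "int p ^ Suc j dvd x ^ p + y ^ p"
proof -
  define S where "S = (\<Sum>i<p. (- y) ^ (p - Suc i) * x ^ i)"
  have "int p dvd x + y"
    using assms(3,4) dvd_power[of j "int p"] dvd_trans by blast
  hence x_cong: "[- y = x] (mod int p)"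
    unfolding cong_iff_dvd_diff by (metis dvd_minus_iff minus_diff_eq diff_minus_eq_add)
  have "[S = (\<Sum>i<p. x ^ (p - 1))] (mod int p)"
    unfolding S_def
  proof (rule cong_sum)
    fix i assume "i \<in> {..<p}"
    hence "x ^ (p - Suc i) * x ^ i = x ^ (p - 1)" by (simp add: power_add[symmetric])
    moreover have "[(- y) ^ (p - Suc i) * x ^ i = x ^ (p - Suc i) * x ^ i] (mod int p)"
      by (rule cong_scalar_right[OF cong_pow[OF x_cong]])
    ultimately show "[(- y) ^ (p - Suc i) * x ^ i = x ^ (p - 1)] (mod int p)" by simp
  qed
  hence "int p dvd S" by (simp add: cong_dvd_iff)
  with assms(4) have "int p ^ j * int p dvd (x + y) * S" by (rule mult_dvd_mono)
  thus ?thesis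
    using power_sum_odd_factor[OF assms(2), of x y] by (simp add: S_def mult.commute)
qed

lemma prime_power_dvd_power_sum_pow:
  fixes x y :: int
  assumes "prime p" "odd p" "int p dvd x + y"
  shows "int p ^ Suc e dvd x ^ (p ^ e) + y ^ (p ^ e)"
proof (induction e)
  case 0
  thus ?case using assms(3) by simp
next
  case (Suc e)
  have "int p ^ Suc (Suc e) dvd (x ^ (p ^ e)) ^ p + (y ^ (p ^ e)) ^ p"
    by (rule prime_power_dvd_power_sum_Suc[OF assms(1,2) _ Suc]) simp
  thus ?case by (simp add: power_mult[symmetric] mult.commute)
qed

lemma prime_power_dvd_power_sum_of_exact_pow2_ord_ratio:
  fixes a b :: int
  assumes "prime p" "odd p" "coprime (int p) (a * b)"
    and "exact_pow2 (Suc t) (ord_ratio p a b)"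
  obtains q where "odd q" "int p ^ e dvd a ^ (2 ^ t * q) + b ^ (2 ^ t * q)"
proof -
  obtain m where m: "ord_ratio p a b = 2 ^ Suc t * m"
    using assms(4) unfolding exact_pow2_def by blast
  have "odd m"
    using assms(4) unfolding exact_pow2_def m by auto
  have "ord_ratio p a b = 2 * (2 ^ t * m)" using m by simp
  with assms(1,3) have "int p dvd a ^ (2 ^ t * m) + b ^ (2 ^ t * m)"
    by (rule prime_dvd_power_sum_half_ord_ratio)
  hence "int p ^ Suc e dvd a ^ (2 ^ t * (m * p ^ e)) + b ^ (2 ^ t * (m * p ^ e))"
    using prime_power_dvd_power_sum_pow[OF assms(1,2)] by (simp add: power_mult mult.assoc)
  hence "int p ^ e dvd a ^ (2 ^ t * (m * p ^ e)) + b ^ (2 ^ t * (m * p ^ e))"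
    by (rule dvd_trans[rotated]) simp
  moreover have "odd (m * p ^ e)" using \<open>odd m\<close> assms(2) by simp
  ultimately show thesis by (rule that[rotated])
qed

lemma dvd_power_sum_of_exact_pow2_ord_ratio:
  fixes a b :: int
  assumes "odd d"
    and "\<forall>p. prime p \<and> p dvd d \<longrightarrow> coprime (int p) (a * b) \<and> exact_pow2 (Suc t) (ord_ratio p a b)"
  shows "\<exists>q. odd q \<and> int d dvd a ^ (2 ^ t * q) + b ^ (2 ^ t * q)"
  using assms
proof (induction d rule: less_induct)
  case (less d)
  show ?case
  proof (cases "d = 1")
    case True
    thus ?thesis by (intro exI[of _ 1]) simp
  next
    case False
    then obtain p where p: "prime p" "p dvd d" using prime_factor_nat by blast
    have "odd p" using less.prems(1) p(2) by (meson dvd_trans)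
    have "d > 0" using less.prems(1) by (simp add: odd_pos)
    moreover have "\<not> is_unit p" using prime_gt_1_nat[OF p(1)] by simp
    ultimately obtain e y where y: "d = p ^ e * y" "\<not> p dvd y"
      using multiplicity_decompose'[of d p] by blast
    have "y dvd d" using y(1) by simp
    hence "y \<le> d" using \<open>d > 0\<close> by (rule dvd_imp_le)
    moreover have "y \<noteq> d" using y(2) p(2) by blast
    ultimately have "y < d" by simp
    moreover have "odd y" using \<open>y dvd d\<close> less.prems(1) by (meson dvd_trans)
    moreover have "\<forall>p. prime p \<and> p dvd y \<longrightarrow> coprime (int p) (a * b) \<and> exact_pow2 (Suc t) (ord_ratio p a b)"
      using less.prems(2) \<open>y dvd d\<close> by (meson dvd_trans)
    ultimately obtain q2 where q2: "odd q2" "int y dvd a ^ (2 ^ t * q2) + b ^ (2 ^ t * q2)"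
      using less.IH by blast
    have "coprime (int p) (a * b)" "exact_pow2 (Suc t) (ord_ratio p a b)"
      using less.prems(2) p by blast+
    then obtain q1 where q1: "odd q1" "int p ^ e dvd a ^ (2 ^ t * q1) + b ^ (2 ^ t * q1)"
      by (rule prime_power_dvd_power_sum_of_exact_pow2_ord_ratio[OF p(1) \<open>odd p\<close>])
    have "coprime (int p ^ e) (int y)"
      using p(1) y(2) by (simp add: prime_imp_coprime)
    hence "int p ^ e * int y dvd a ^ (2 ^ t * (q1 * q2)) + b ^ (2 ^ t * (q1 * q2))"
      by (rule mult_dvd_power_sum_odd_multiples[OF q1(2) q2(2) _ q1(1) q2(1)])
    hence "int d dvd a ^ (2 ^ t * (q1 * q2)) + b ^ (2 ^ t * (q1 * q2))"
      by (simp add: y(1))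
    moreover have "odd (q1 * q2)" using q1(1) q2(1) by simp
    ultimately show ?thesis by blast
  qed
qed

lemma odd_dvd_power_sum_iff_exact_pow2_ord_ratio:
  fixes a b :: int
  assumes "coprime a b" "odd d"
  shows "(\<exists>q. odd q \<and> int d dvd a ^ (2 ^ t * q) + b ^ (2 ^ t * q)) \<longleftrightarrow>
    (\<forall>p. prime p \<and> p dvd d \<longrightarrow> coprime (int p) (a * b) \<and> exact_pow2 (Suc t) (ord_ratio p a b))"
proof
  assume "\<exists>q. odd q \<and> int d dvd a ^ (2 ^ t * q) + b ^ (2 ^ t * q)"
  then obtain q where q: "odd q" "int d dvd a ^ (2 ^ t * q) + b ^ (2 ^ t * q)" by blast
  show "\<forall>p. prime p \<and> p dvd d \<longrightarrow> coprime (int p) (a * b) \<and> exact_pow2 (Suc t) (ord_ratio p a b)"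
  proof (intro allI impI)
    fix p assume p: "prime p \<and> p dvd d"
    hence "odd p" using assms(2) dvd_trans by blast
    have p_dvd: "int p dvd a ^ (2 ^ t * q) + b ^ (2 ^ t * q)"
      using p q(2) by (meson dvd_trans int_dvd_int_iff)
    moreover have "2 ^ t * q > 0" using q(1) by (simp add: odd_pos)
    ultimately have "coprime (int p) (a * b)"
      using assms(1) p by (intro coprime_prime_of_dvd_power_sum) auto
    thus "coprime (int p) (a * b) \<and> exact_pow2 (Suc t) (ord_ratio p a b)"
      using exact_pow2_ord_ratio_of_dvd_power_sum p \<open>odd p\<close> q(1) p_dvd by blast
  qed
next
  assume "\<forall>p. prime p \<and> p dvd d \<longrightarrow> coprime (int p) (a * b) \<and> exact_pow2 (Suc t) (ord_ratio p a b)"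
  with assms(2) show "\<exists>q. odd q \<and> int d dvd a ^ (2 ^ t * q) + b ^ (2 ^ t * q)"
    by (rule dvd_power_sum_of_exact_pow2_ord_ratio)
qed

lemma odd_dvd_some_power_sum_iff_exact_pow2_ord_ratio:
  fixes a b :: int
  assumes "coprime a b" "odd d"
  shows "(\<exists>k>0. int d dvd a ^ k + b ^ k) \<longleftrightarrow>
    (\<exists>s\<ge>1. \<forall>p. prime p \<and> p dvd d \<longrightarrow> coprime (int p) (a * b) \<and> exact_pow2 s (ord_ratio p a b))"
    (is "_ \<longleftrightarrow> ?rhs")
proof -
  have "(\<exists>k>0. int d dvd a ^ k + b ^ k) \<longleftrightarrow> (\<exists>t q. odd q \<and> int d dvd a ^ (2 ^ t * q) + b ^ (2 ^ t * q))"
  proof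
    assume "\<exists>k>0. int d dvd a ^ k + b ^ k"
    then obtain k where "k > 0" "int d dvd a ^ k + b ^ k" by blast
    moreover obtain q t where "k = q * 2 ^ t" "odd q"
      using \<open>k > 0\<close> by (rule odd_times_pow2_decomposition)
    ultimately show "\<exists>t q. odd q \<and> int d dvd a ^ (2 ^ t * q) + b ^ (2 ^ t * q)"
      by (auto simp: mult.commute)
  next
    assume "\<exists>t q. odd q \<and> int d dvd a ^ (2 ^ t * q) + b ^ (2 ^ t * q)"
    then obtain t q where "odd q" "int d dvd a ^ (2 ^ t * q) + b ^ (2 ^ t * q)" by blast
    moreover have "2 ^ t * q > 0" using \<open>odd q\<close> by (simp add: odd_pos)
    ultimately show "\<exists>k>0. int d dvd a ^ k + b ^ k" by blast
  qed
  also have "\<dots> \<longleftrightarrow> (\<exists>t. \<forall>p. prime p \<and> p dvd d \<longrightarrow> coprime (int p) (a * b) \<and> exact_pow2 (Suc t) (ord_ratio p a b))"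
    using odd_dvd_power_sum_iff_exact_pow2_ord_ratio[OF assms] by blast
  also have "\<dots> \<longleftrightarrow> ?rhs"
    by (rule ex_Suc_iff_ex_ge_1)
  finally show ?thesis .
qed

lemma mem_G_iff: "d \<in> G a b \<beta> \<longleftrightarrow> d > 0 \<and> (\<exists>k>0. 2 ^ \<beta> * int d dvd a ^ k + b ^ k)"
  by (simp add: G_def)

lemma double_mem_G_iff: "2 * d \<in> G a b \<beta> \<longleftrightarrow> d \<in> G a b (Suc \<beta>)"
  by (simp add: mem_G_iff ac_simps)

lemma G_Suc_subset: "G a b (Suc \<beta>) \<subseteq> G a b \<beta>"
proof
  fix d assume "d \<in> G a b (Suc \<beta>)"
  then obtain k where "d > 0" "k > 0" "2 * (2 ^ \<beta> * int d) dvd a ^ k + b ^ k"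
    by (auto simp: mem_G_iff mult.assoc)
  thus "d \<in> G a b \<beta>"
    unfolding mem_G_iff by (blast dest: dvd_mult_right)
qed

lemma G_eq_odd_Un_double: "G a b \<beta> = {d \<in> G a b \<beta>. odd d} \<union> (\<lambda>d. 2 * d) ` G a b (Suc \<beta>)"
proof -
  have "d \<in> (\<lambda>d. 2 * d) ` G a b (Suc \<beta>)" if "d \<in> G a b \<beta>" "even d" for d
    using that double_mem_G_iff[of "d div 2"] by force
  thus ?thesis
    using double_mem_G_iff by blast
qed

context
  fixes a b :: int and \<gamma> :: nat
  assumes coprime_ab: "coprime a b" and odd_a: "odd a" and odd_b: "odd b"
    and \<gamma>_pos: "\<gamma> > 0" and exact_\<gamma>: "exact_pow2 \<gamma> (a + b)"
begin

lemma exact_pow2_power_sum: "exact_pow2 (if odd k then \<gamma> else 1) (a ^ k + b ^ k)"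
  using exact_pow2_odd_power_sum[OF exact_\<gamma> odd_a odd_b] exact_pow2_even_power_sum[OF odd_a odd_b]
  by simp

lemma odd_times_pow2_mem_G_iff:
  assumes "odd d"
  shows "d * 2 ^ i \<in> G a b \<beta> \<longleftrightarrow>
    (\<exists>k>0. \<beta> + i \<le> (if odd k then \<gamma> else 1) \<and> int d dvd a ^ k + b ^ k)"
proof -
  have "d * 2 ^ i \<in> G a b \<beta> \<longleftrightarrow> (\<exists>k>0. 2 ^ (\<beta> + i) * int d dvd a ^ k + b ^ k)"
    using assms by (simp add: mem_G_iff odd_pos power_add ac_simps)
  thus ?thesis
    using exact_pow2_dvd_iff[OF exact_pow2_power_sum assms] by simp
qed

lemma G_eq_empty:
  assumes "\<gamma> < \<beta>"
  shows "G a b \<beta> = {}"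
proof (rule ccontr)
  assume "G a b \<beta> \<noteq> {}"
  then obtain x where "x \<in> G a b \<beta>" by blast
  moreover obtain d i where "x = d * 2 ^ i" "odd d"
    using \<open>x \<in> G a b \<beta>\<close> by (auto simp: mem_G_iff elim: odd_times_pow2_decomposition)
  ultimately show False
    using odd_times_pow2_mem_G_iff assms \<gamma>_pos by (auto split: if_splits)
qed

lemma odd_mem_G_iff_le_1:
  assumes "odd d" "\<beta> \<le> 1"
  shows "d \<in> G a b \<beta> \<longleftrightarrow> (\<exists>k>0. int d dvd a ^ k + b ^ k)"
  using odd_times_pow2_mem_G_iff[OF assms(1), of 0 \<beta>] assms(2) \<gamma>_pos by auto

lemma odd_times_pow2_mem_G_iff_ge_2:
  assumes "odd d" "2 \<le> \<beta>"
  shows "d * 2 ^ i \<in> G a b \<beta> \<longleftrightarrow> \<beta> + i \<le> \<gamma> \<and> (\<exists>k. odd k \<and> int d dvd a ^ k + b ^ k)"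
  using odd_times_pow2_mem_G_iff[OF assms(1), of i \<beta>] assms(2) by (auto intro: odd_pos)

lemma mem_G_top_iff:
  assumes "2 \<le> \<gamma>"
  shows "x \<in> G a b \<gamma> \<longleftrightarrow> odd x \<and> (\<exists>k. odd k \<and> int x dvd a ^ k + b ^ k)"
proof
  assume "x \<in> G a b \<gamma>"
  moreover obtain d i where x: "x = d * 2 ^ i" "odd d"
    using \<open>x \<in> G a b \<gamma>\<close> by (auto simp: mem_G_iff elim: odd_times_pow2_decomposition)
  ultimately show "odd x \<and> (\<exists>k. odd k \<and> int x dvd a ^ k + b ^ k)"
    using odd_times_pow2_mem_G_iff_ge_2[OF x(2) assms] by auto
next
  assume "odd x \<and> (\<exists>k. odd k \<and> int x dvd a ^ k + b ^ k)"
  thus "x \<in> G a b \<gamma>"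
    using odd_times_pow2_mem_G_iff_ge_2[of x \<gamma> 0] assms by simp
qed

lemma G_top_eq:
  assumes "2 \<le> \<gamma>"
  shows "G a b \<gamma> = {d. d > 0 \<and> (d = 1 \<or> (odd d \<and>
           (\<forall>p. prime p \<and> p dvd d \<longrightarrow> coprime (int p) (a * b) \<and> exact_pow2 1 (ord_ratio p a b))))}"
    (is "_ = {d. ?R d}")
proof -
  have "d \<in> G a b \<gamma> \<longleftrightarrow> ?R d" for d
  proof (cases "odd d")
    case True
    hence "d \<in> G a b \<gamma> \<longleftrightarrow>
        (\<forall>p. prime p \<and> p dvd d \<longrightarrow> coprime (int p) (a * b) \<and> exact_pow2 1 (ord_ratio p a b))"
      using mem_G_top_iff[OF assms, of d] odd_dvd_power_sum_iff_exact_pow2_ord_ratio[OF coprime_ab True, of 0]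
      by simp
    thus ?thesis using True by (auto simp: odd_pos)
  next
    case False
    thus ?thesis using mem_G_top_iff[OF assms, of d] by auto
  qed
  thus ?thesis by blast
qed

lemma G_eq_Union_top:
  assumes "2 \<le> \<beta>" "\<beta> \<le> \<gamma>"
  shows "G a b \<beta> = (\<Union>i\<in>{0..\<gamma> - \<beta>}. (\<lambda>d. d * 2 ^ i) ` G a b \<gamma>)"
proof (intro equalityI subsetI)
  fix x assume x_mem: "x \<in> G a b \<beta>"
  then obtain d i where x: "x = d * 2 ^ i" "odd d"
    by (auto simp: mem_G_iff elim: odd_times_pow2_decomposition)
  have "\<beta> + i \<le> \<gamma> \<and> (\<exists>k. odd k \<and> int d dvd a ^ k + b ^ k)"
    using x_mem odd_times_pow2_mem_G_iff_ge_2[OF x(2) assms(1)] by (simp add: x(1))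
  moreover have "d \<in> G a b \<gamma> \<longleftrightarrow> (\<exists>k. odd k \<and> int d dvd a ^ k + b ^ k)"
    using mem_G_top_iff[of d] x(2) assms by simp
  ultimately show "x \<in> (\<Union>i\<in>{0..\<gamma> - \<beta>}. (\<lambda>d. d * 2 ^ i) ` G a b \<gamma>)"
    using x(1) by auto
next
  fix x assume "x \<in> (\<Union>i\<in>{0..\<gamma> - \<beta>}. (\<lambda>d. d * 2 ^ i) ` G a b \<gamma>)"
  then obtain d i where x: "x = d * 2 ^ i" "i \<le> \<gamma> - \<beta>" "d \<in> G a b \<gamma>" by auto
  hence "odd d \<and> (\<exists>k. odd k \<and> int d dvd a ^ k + b ^ k)"
    using mem_G_top_iff[of d] assms by simp
  thus "x \<in> G a b \<beta>"
    using odd_times_pow2_mem_G_iff_ge_2[of d \<beta> i] x(1,2) assms by simp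
qed

lemma G_eq_Suc_Un_top:
  assumes "2 \<le> \<beta>" "\<beta> < \<gamma>"
  shows "G a b \<beta> = G a b (\<beta> + 1) \<union> (\<lambda>d. d * 2 ^ (\<gamma> - \<beta>)) ` G a b \<gamma>"
proof -
  have "\<gamma> - \<beta> = Suc (\<gamma> - (\<beta> + 1))" using assms(2) by simp
  hence "{0..\<gamma> - \<beta>} = insert (\<gamma> - \<beta>) {0..\<gamma> - (\<beta> + 1)}"
    by (simp only: atLeast0_atMost_Suc)
  hence "(\<Union>i\<in>{0..\<gamma> - \<beta>}. (\<lambda>d. d * 2 ^ i) ` G a b \<gamma>) =
      (\<Union>i\<in>{0..\<gamma> - (\<beta> + 1)}. (\<lambda>d. d * 2 ^ i) ` G a b \<gamma>) \<union> (\<lambda>d. d * 2 ^ (\<gamma> - \<beta>)) ` G a b \<gamma>"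
    by (simp add: Un_commute)
  thus ?thesis
    using G_eq_Union_top[of \<beta>] G_eq_Union_top[of "\<beta> + 1"] assms by simp
qed

lemma G_one_eq:
  "G a b 1 = (\<lambda>d. 2 * d) ` G a b 2 \<union>
     {d. d > 0 \<and> (d = 1 \<or> (odd d \<and> (\<exists>s\<ge>1.
        \<forall>p. prime p \<and> p dvd d \<longrightarrow> coprime (int p) (a * b) \<and> exact_pow2 s (ord_ratio p a b))))}"
proof -
  have "{d \<in> G a b 1. odd d} = {d. d > 0 \<and> (d = 1 \<or> (odd d \<and> (\<exists>s\<ge>1.
        \<forall>p. prime p \<and> p dvd d \<longrightarrow> coprime (int p) (a * b) \<and> exact_pow2 s (ord_ratio p a b))))}"
    using odd_mem_G_iff_le_1 odd_dvd_some_power_sum_iff_exact_pow2_ord_ratio[OF coprime_ab]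
    by (auto intro: odd_pos)
  thus ?thesis
    using G_eq_odd_Un_double[of a b 1] by (simp add: numeral_2_eq_2 Un_commute)
qed

lemma G_zero_eq: "G a b 0 = G a b 1 \<union> (\<lambda>d. 2 * d) ` G a b 1"
proof -
  have "{d \<in> G a b 0. odd d} \<subseteq> G a b 1"
    using odd_mem_G_iff_le_1 by auto
  thus ?thesis
    using G_eq_odd_Un_double[of a b 0] G_Suc_subset[of a b 0] by auto
qed

end

theorem theorem2p15:
  fixes a b :: int and \<beta> \<gamma> :: nat
  assumes "coprime a b" and "odd a" and "odd b"
    and "\<gamma> > 0" and "exact_pow2 \<gamma> (a + b)"
  shows
    "(\<gamma> < \<beta> \<longrightarrow> G a b \<beta> = {})
   \<and> (2 \<le> \<beta> \<and> \<beta> \<le> \<gamma> \<longrightarrow>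
        G a b \<gamma> = {d::nat. d > 0 \<and> (d = 1 \<or> (odd d \<and>
           (\<forall>p. prime p \<and> p dvd d \<longrightarrow>
              coprime (int p) (a * b) \<and> exact_pow2 1 (ord_ratio p a b))))})
   \<and> (2 \<le> \<beta> \<and> \<beta> < \<gamma> \<longrightarrow>
        G a b \<beta> = (\<Union>i\<in>{0..\<gamma> - \<beta>}. (\<lambda>d. d * 2 ^ i) ` G a b \<gamma>)
      \<and> G a b \<beta> = G a b (\<beta> + 1) \<union> (\<lambda>d. d * 2 ^ (\<gamma> - \<beta>)) ` G a b \<gamma>)
   \<and> (\<beta> \<in> {0, 1} \<longrightarrow>
        G a b 1 = (\<lambda>d. 2 * d) ` G a b 2 \<union>
          {d::nat. d > 0 \<and> (d = 1 \<or> (odd d \<and> (\<exists>s::nat. s \<ge> 1 \<and>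
             (\<forall>p. prime p \<and> p dvd d \<longrightarrow>
                coprime (int p) (a * b) \<and> exact_pow2 s (ord_ratio p a b)))))}
      \<and> G a b 0 = G a b 1 \<union> (\<lambda>d. 2 * d) ` G a b 1)"
  using G_eq_empty[OF assms] G_top_eq[OF assms] G_eq_Union_top[OF assms]
    G_eq_Suc_Un_top[OF assms] G_one_eq[OF assms] G_zero_eq[OF assms]
  by (intro conjI impI) (meson order.trans less_imp_le)+

end
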